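(* Let $\ell\ge2$, $0<\mu<L$, data points $\mathbf{x}_i\in\mathbb{R}^n$, and measurements $y_i\in\mathbb{R}$, $\mathbf{z}_i\in\mathbb{R}^n$ for $i\in\{1,\dots,\ell\}$; let $\mathcal{V}=\{(i,j):1\le i<j\le\ell\}$. For each $e=(i,j)\in\mathcal{V}$ introduce copies $\varphi_{i,e},\varphi_{j,e}\in\mathbb{R}$, $\boldsymbol{\delta}_{i,e},\boldsymbol{\delta}_{j,e}\in\mathbb{R}^n$, and let $(C_e)$ denote the two constraints $$\varphi_{i,e}-\varphi_{j,e}-\boldsymbol{\delta}_{j,e}^\top(\mathbf{x}_i-\mathbf{x}_j)\ge\frac{1}{2(1-\mu/L)}\Big(\frac1L\|\boldsymbol{\delta}_{i,e}-\boldsymbol{\delta}_{j,e}\|^2+\mu\|\mathbf{x}_i-\mathbf{x}_j\|^2-2\frac{\mu}{L}(\boldsymbol{\delta}_{j,e}-\boldsymbol{\delta}_{i,e})^\top(\mathbf{x}_j-\mathbf{x}_i)\Big),$$ $$\varphi_{j,e}-\varphi_{i,e}-\boldsymbol{\delta}_{i,e}^\top(\mathbf{x}_j-\mathbf{x}_i)\ge\frac{1}{2(1-\mu/L)}\Big(\frac1L\|\boldsymbol{\delta}_{i,e}-\boldsymbol{\delta}_{j,e}\|^2+\mu\|\mathbf{x}_i-\mathbf{x}_j\|^2-2\frac{\mu}{L}(\boldsymbol{\delta}_{i,e}-\boldsymbol{\delta}_{j,e})^\top(\mathbf{x}_j-\mathbf{x}_i)\Big).$$ Consider the problem $$\min\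 \frac{1}{2(\ell-1)}\sum_{e=(i,j)\in\mathcal{V}}\left\|\begin{bmatrix}\varphi_{i,e}\\ \varphi_{j,e}\end{bmatrix}-\begin{bmatrix}y_i\\ y_j\end{bmatrix}\right\|^2+\left\|\begin{bmatrix}\boldsymbol{\delta}_{i,e}\\ \boldsymbol{\delta}_{j,e}\end{bmatrix}-\begin{bmatrix}\mathbf{z}_i\\ \mathbf{z}_j\end{bmatrix}\right\|^2$$ subject to $(C_e)$ for all $e\in\mathcal{V}$ and the consensus constraints $(\varphi_{i,e},\boldsymbol{\delta}_{i,e})=(\varphi_{i,e'},\boldsymbol{\delta}_{i,e'})$ for all $e,e'$ both involving index $i$. Then this problem can be solved by Peaceman–Rachford splitting with penalty $\rho>0$ (splitting into the objective plus the indicators of the constraints $(C_e)$, and the indicator of the consensus constraints), which yields the iteration: for $h\in\mathbb{N}$ and every $e=(i,j)\in\mathcal{V}$, with $\mathbf{t}_e=(\varphi_{i,e},\varphi_{j,e},\boldsymbol{\delta}_{i,e},\boldsymbol{\delta}_{j,e})\in\mathbb{R}^{2(n+1)}$ and $\mathbf{t}_{m,e}=(\varphi_{m,e},\boldsymbol{\delta}_{m,e})$ for $m\in\{i,j\}$, $$\mathbf{t}_e^h=\operatorname*{argmin}_{\mathbf{t}_e\in\mathbb{R}^{2(n+1)}}\left\{\frac{1}{2(\ell-1)}\left\|\mathbf{t}_e-(y_i,y_j,\mathbf{z}_i,\mathbf{z}_j)\right\|^2+\frac{1}{2\rho}\|\mathbf{t}_e-\mathbf{s}_e^h\|^2\right\}\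 \text{s.t. } (C_e),$$ $$\mathbf{v}_{i,e}^h=\frac{1}{\ell-1}\sum_{e'\,:\,i\sim e'}\left(2\mathbf{t}_{i,e'}^h-\mathbf{s}_{e',i}^h\right),\qquad \mathbf{s}_{e,m}^{h+1}=\mathbf{s}_{e,m}^h+\mathbf{v}_{m,e}^h-\mathbf{t}_{m,e}^h\ \ (m\in\{i,j\}),$$ where $\mathbf{s}_e^h\in\mathbb{R}^{2(n+1)}$ is the PRS auxiliary variable and $\mathbf{s}_{e,m}^h$ its components corresponding to index $m$. In particular, each iteration solves in parallel $\ell(\ell-1)/2$ convex QCQPs, each in $2(n+1)$ variables with $2$ constraints, and then aggregates the results.
   Context: The Peaceman–Rachford splitting for $\min\psi+\chi$ with penalty $\rho>0$ is $\boldsymbol{\xi}^h=\operatorname{prox}_{\rho\psi}(\mathbf{s}^h)$, $\mathbf{v}^h=\operatorname{prox}_{\rho\chi}(2\boldsymbol{\xi}^h-\mathbf{s}^h)$, $\mathbf{s}^{h+1}=\mathbf{s}^h+\mathbf{v}^h-\boldsymbol{\xi}^h$, with $\operatorname{prox}_{\alpha g}(\mathbf{y})=\operatorname{argmin}_{\mathbf{x}}\{g(\mathbf{x})+\|\mathbf{x}-\mathbf{y}\|^2/(2\alpha)\}$. $i\sim e'$ means the pair $e'$ involves index $i$. The problem is a per-pair-copy reformulation of smooth strongly convex regression: estimating function values $\varphi_i$ and gradients $\boldsymbol{\delta}_i$ of a $\mu$-strongly convex, $L$-smooth function from noisy measurements $y_i,\mathbf{z}_i$. *)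

theory Defs
  imports "HOL-Analysis.Analysis"
begin

text \<open>Indices are 0-based: 0..l-1 stands for 1..l.
  The full PRS variable assigns to each pair e and each index m of e the copy
  (phi_{m,e}, delta_{m,e}) :: real \<times> real^'n; values at non-slots are forced to 0.\<close>

type_synonym 'n var = "nat \<times> nat \<Rightarrow> nat \<Rightarrow> real \<times> (real ^ 'n)"

definition pairs :: "nat \<Rightarrow> (nat \<times> nat) set" where
  "pairs l = {(i, j). i < j \<and> j < l}"

definition slots :: "nat \<Rightarrow> ((nat \<times> nat) \<times> nat) set" where
  "slots l = {(e, m). e \<in> pairs l \<and> (m = fst e \<or> m = snd e)}"

definition space :: "nat \<Rightarrow> ('n::finite) var set" where
  "space l = {t. \<forall>e m. (e, m) \<notin> slots l \<longrightarrow> t e m = 0}"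

definition sqn :: "nat \<Rightarrow> ('n::finite) var \<Rightarrow> real" where
  "sqn l t = (\<Sum>(e, m)\<in>slots l. (norm (t e m))\<^sup>2)"

definition vdiff :: "('n::finite) var \<Rightarrow> ('n::finite) var \<Rightarrow> ('n::finite) var" where
  "vdiff a b = (\<lambda>e m. a e m - b e m)"

definition constrC :: "real \<Rightarrow> real \<Rightarrow> real ^ 'n \<Rightarrow> real ^ 'n
    \<Rightarrow> real \<times> (real ^ 'n) \<Rightarrow> real \<times> (real ^ 'n) \<Rightarrow> bool" where
  "constrC \<mu> L xi xj ti tj =
    (let \<phi>i = fst ti; \<delta>i = snd ti; \<phi>j = fst tj; \<delta>j = snd tj in
     \<phi>i - \<phi>j - inner \<delta>j (xi - xj) \<ge> 1 / (2 * (1 - \<mu> / L)) *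
        ((1 / L) * (norm (\<delta>i - \<delta>j))\<^sup>2 + \<mu> * (norm (xi - xj))\<^sup>2
         - 2 * (\<mu> / L) * inner (\<delta>j - \<delta>i) (xj - xi))
   \<and> \<phi>j - \<phi>i - inner \<delta>i (xj - xi) \<ge> 1 / (2 * (1 - \<mu> / L)) *
        ((1 / L) * (norm (\<delta>i - \<delta>j))\<^sup>2 + \<mu> * (norm (xi - xj))\<^sup>2
         - 2 * (\<mu> / L) * inner (\<delta>i - \<delta>j) (xj - xi)))"

definition constr_all :: "nat \<Rightarrow> real \<Rightarrow> real \<Rightarrow> (nat \<Rightarrow> real ^ 'n) \<Rightarrow> ('n::finite) var \<Rightarrow> bool" where
  "constr_all l \<mu> L x t =
     (\<forall>(i, j)\<in>pairs l. constrC \<mu> L (x i) (x j) (t (i, j) i) (t (i, j) j))"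

definition consensus :: "nat \<Rightarrow> ('n::finite) var \<Rightarrow> bool" where
  "consensus l t = (\<forall>i e e'. (e, i) \<in> slots l \<and> (e', i) \<in> slots l \<longrightarrow> t e i = t e' i)"

definition objective :: "nat \<Rightarrow> (nat \<Rightarrow> real) \<Rightarrow> (nat \<Rightarrow> real ^ 'n) \<Rightarrow> ('n::finite) var \<Rightarrow> real" where
  "objective l y z t = 1 / (2 * (real l - 1)) *
     (\<Sum>(e, m)\<in>slots l. (norm (t e m - (y m, z m)))\<^sup>2)"

text \<open>p is a value of prox_{\<alpha>(g + indicator K)}(w) on the variable space:
  a minimiser of g t + ||t - w||^2/(2\<alpha>) over t in the space satisfying K.\<close>
definition is_prox :: "nat \<Rightarrow> (('n::finite) var \<Rightarrow> bool) \<Rightarrow> (('n::finite) var \<Rightarrow> real) \<Rightarrow> real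
    \<Rightarrow> ('n::finite) var \<Rightarrow> ('n::finite) var \<Rightarrow> bool" where
  "is_prox l K g \<alpha> w p =
     (p \<in> space l \<and> K p \<and>
      (\<forall>t\<in>space l. K t \<longrightarrow>
         g p + sqn l (vdiff p w) / (2 * \<alpha>) \<le> g t + sqn l (vdiff t w) / (2 * \<alpha>)))"

definition edge_argmin :: "real \<Rightarrow> real \<Rightarrow> real \<Rightarrow> nat \<Rightarrow> (nat \<Rightarrow> real ^ 'n)
    \<Rightarrow> (nat \<Rightarrow> real) \<Rightarrow> (nat \<Rightarrow> real ^ 'n) \<Rightarrow> nat \<Rightarrow> nat
    \<Rightarrow> real \<times> (real ^ 'n) \<Rightarrow> real \<times> (real ^ 'n)
    \<Rightarrow> real \<times> (real ^ 'n) \<Rightarrow> real \<times> (real ^ 'n) \<Rightarrow> bool" where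
  "edge_argmin \<mu> L \<rho> l x y z i j si sj a b =
    (let f = (\<lambda>a b. 1 / (2 * (real l - 1)) *
                ((norm (a - (y i, z i)))\<^sup>2 + (norm (b - (y j, z j)))\<^sup>2)
              + 1 / (2 * \<rho>) * ((norm (a - si))\<^sup>2 + (norm (b - sj))\<^sup>2))
     in constrC \<mu> L (x i) (x j) a b \<and>
        (\<forall>a' b'. constrC \<mu> L (x i) (x j) a' b' \<longrightarrow> f a b \<le> f a' b'))"

end

theory Submission
  imports Defs
begin

text \<open>The objective and the proximal term \<open>\<parallel>t - s\<parallel>\<^sup>2/(2\<rho>)\<close> are sums over the pairs \<open>e\<close>,
  and \<open>(C\<^sub>e)\<close> only involves the two copies belonging to \<open>e\<close>; hence the first proximal step
  splits into one independent QCQP per pair. The second proximal step is the orthogonal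
  projection onto the consensus subspace: replacing the \<open>\<ell> - 1\<close> copies of each index by
  their mean leaves a residual orthogonal to every consensus direction, so by Pythagoras the
  mean is the unique minimiser.\<close>

lemma finite_pairs: "finite (pairs l)"
proof -
  have "pairs l \<subseteq> {..<l} \<times> {..<l}" by (auto simp: pairs_def)
  then show ?thesis by (rule finite_subset) auto
qed

lemma finite_slots: "finite (slots l)"
proof -
  have "slots l \<subseteq> pairs l \<times> {..<l}" by (auto simp: slots_def pairs_def)
  then show ?thesis by (rule finite_subset) (simp add: finite_pairs)
qed

lemma card_pairs: "card (pairs l) = l * (l - 1) div 2"
proof (induction l)
  case 0
  then show ?case by (simp add: pairs_def)
next
  case (Suc l)
  have split: "pairs (Suc l) = pairs l \<union> (\<lambda>i. (i, l)) ` {..<l}"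
    by (auto simp: pairs_def)
  have "card (pairs (Suc l)) = card (pairs l) + card ((\<lambda>i. (i, l)) ` {..<l})"
    unfolding split by (rule card_Un_disjoint) (simp_all add: finite_pairs, auto simp: pairs_def)
  also have "\<dots> = l * (l - 1) div 2 + l" by (simp add: Suc card_image inj_on_def)
  also have "\<dots> = Suc l * (Suc l - 1) div 2" by (cases l) (auto simp: algebra_simps)
  finally show ?case .
qed

lemma sum_slots_pairs:
  "(\<Sum>(e, m)\<in>slots l. F e m) = (\<Sum>e\<in>pairs l. F e (fst e) + F e (snd e))"
proof -
  have split: "slots l = (\<lambda>e. (e, fst e)) ` pairs l \<union> (\<lambda>e. (e, snd e)) ` pairs l"
    by (auto simp: slots_def)
  have "(\<Sum>(e, m)\<in>slots l. F e m)
      = (\<Sum>(e, m)\<in>(\<lambda>e. (e, fst e)) ` pairs l. F e m) + (\<Sum>(e, m)\<in>(\<lambda>e. (e, snd e)) ` pairs l. F e m)"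
    unfolding split by (rule sum.union_disjoint) (simp_all add: finite_pairs, auto simp: pairs_def)
  also have "\<dots> = (\<Sum>e\<in>pairs l. F e (fst e)) + (\<Sum>e\<in>pairs l. F e (snd e))"
    by (simp add: sum.reindex inj_on_def)
  finally show ?thesis by (simp add: sum.distrib)
qed

definition incident :: "nat \<Rightarrow> nat \<Rightarrow> (nat \<times> nat) set" where
  "incident l i = {e \<in> pairs l. i = fst e \<or> i = snd e}"

lemma slots_iff_incident: "(e, m) \<in> slots l \<longleftrightarrow> e \<in> incident l m"
  by (auto simp: slots_def incident_def)

lemma card_incident:
  assumes "m < l"
  shows "card (incident l m) = l - 1"
proof -
  have split: "incident l m = (\<lambda>i. (i, m)) ` {..<m} \<union> (\<lambda>j. (m, j)) ` {m<..<l}"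
    using assms by (auto simp: incident_def pairs_def)
  have "card (incident l m) = card ((\<lambda>i. (i, m)) ` {..<m}) + card ((\<lambda>j. (m, j)) ` {m<..<l})"
    unfolding split by (rule card_Un_disjoint) auto
  also have "\<dots> = m + (l - Suc m)" by (simp add: card_image inj_on_def)
  finally show ?thesis using assms by simp
qed

lemma sum_slots_incident:
  "(\<Sum>(e, m)\<in>slots l. F e m) = (\<Sum>m<l. \<Sum>e\<in>incident l m. F e m)"
proof -
  have slots_eq: "slots l = (\<lambda>(m, e). (e, m)) ` (SIGMA m:{..<l}. incident l m)"
    by (force simp: slots_def incident_def pairs_def)
  have "finite (incident l m)" for m
    using finite_pairs by (simp add: incident_def)
  then show ?thesis
    unfolding slots_eq by (simp add: sum.reindex inj_on_def sum.Sigma split_beta)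
qed

lemma sum_minimal_iff_termwise_minimal:
  fixes f :: "'i \<Rightarrow> 'a \<Rightarrow> 'b::ordered_ab_group_add"
  assumes "finite I" and p: "\<And>e. p e \<in> A e"
  shows "(\<forall>t. (\<forall>e. t e \<in> A e) \<longrightarrow> (\<Sum>e\<in>I. f e (p e)) \<le> (\<Sum>e\<in>I. f e (t e)))
     \<longleftrightarrow> (\<forall>e\<in>I. \<forall>a\<in>A e. f e (p e) \<le> f e a)"
proof
  assume min: "\<forall>t. (\<forall>e. t e \<in> A e) \<longrightarrow> (\<Sum>e\<in>I. f e (p e)) \<le> (\<Sum>e\<in>I. f e (t e))"
  show "\<forall>e\<in>I. \<forall>a\<in>A e. f e (p e) \<le> f e a"
  proof (intro ballI)
    fix e a assume e: "e \<in> I" and a: "a \<in> A e"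
    let ?t = "p(e := a)"
    have rest: "(\<Sum>e'\<in>I - {e}. f e' (?t e')) = (\<Sum>e'\<in>I - {e}. f e' (p e'))"
      by (rule sum.cong) auto
    have "(\<Sum>e\<in>I. f e (p e)) \<le> (\<Sum>e\<in>I. f e (?t e))"
      using min a p by simp
    then have "f e (p e) + (\<Sum>e'\<in>I - {e}. f e' (p e')) \<le> f e a + (\<Sum>e'\<in>I - {e}. f e' (p e'))"
      using e \<open>finite I\<close> rest by (simp add: sum.remove)
    then show "f e (p e) \<le> f e a" by (rule add_le_imp_le_right)
  qed
next
  assume "\<forall>e\<in>I. \<forall>a\<in>A e. f e (p e) \<le> f e a"
  then show "\<forall>t. (\<forall>e. t e \<in> A e) \<longrightarrow> (\<Sum>e\<in>I. f e (p e)) \<le> (\<Sum>e\<in>I. f e (t e))"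
    by (auto intro: sum_mono)
qed

definition edge_cost :: "real \<Rightarrow> nat \<Rightarrow> (nat \<Rightarrow> real) \<Rightarrow> (nat \<Rightarrow> real ^ 'n) \<Rightarrow> nat \<Rightarrow> nat
    \<Rightarrow> real \<times> (real ^ 'n) \<Rightarrow> real \<times> (real ^ 'n)
    \<Rightarrow> real \<times> (real ^ 'n) \<Rightarrow> real \<times> (real ^ 'n) \<Rightarrow> real" where
  "edge_cost \<rho> l y z i j si sj a b =
     1 / (2 * (real l - 1)) * ((norm (a - (y i, z i)))\<^sup>2 + (norm (b - (y j, z j)))\<^sup>2)
     + 1 / (2 * \<rho>) * ((norm (a - si))\<^sup>2 + (norm (b - sj))\<^sup>2)"

lemma edge_argmin_iff:
  "edge_argmin \<mu> L \<rho> l x y z i j si sj a b \<longleftrightarrow>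
     constrC \<mu> L (x i) (x j) a b \<and>
     (\<forall>a' b'. constrC \<mu> L (x i) (x j) a' b' \<longrightarrow>
        edge_cost \<rho> l y z i j si sj a b \<le> edge_cost \<rho> l y z i j si sj a' b')"
  by (simp add: edge_argmin_def edge_cost_def Let_def)

lemma objective_plus_dist_eq_sum_edge_cost:
  "objective l y z t + sqn l (vdiff t w) / (2 * \<rho>) =
     (\<Sum>e\<in>pairs l. edge_cost \<rho> l y z (fst e) (snd e) (w e (fst e)) (w e (snd e))
                    (t e (fst e)) (t e (snd e)))"
  unfolding objective_def sqn_def vdiff_def edge_cost_def sum_slots_pairs
  by (simp add: sum.distrib sum_distrib_left add_divide_distrib sum_divide_distrib)

definition feasible_block :: "nat \<Rightarrow> real \<Rightarrow> real \<Rightarrow> (nat \<Rightarrow> real ^ 'n) \<Rightarrow> nat \<times> nat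
    \<Rightarrow> (nat \<Rightarrow> real \<times> (real ^ 'n)) set" where
  "feasible_block l \<mu> L x e =
     (if e \<in> pairs l
      then {u. constrC \<mu> L (x (fst e)) (x (snd e)) (u (fst e)) (u (snd e))
               \<and> (\<forall>m. m \<noteq> fst e \<and> m \<noteq> snd e \<longrightarrow> u m = 0)}
      else {\<lambda>_. 0})"

lemma space_constr_all_iff_feasible_blocks:
  "t \<in> space l \<and> constr_all l \<mu> L x t \<longleftrightarrow> (\<forall>e. t e \<in> feasible_block l \<mu> L x e)"
proof
  assume t: "t \<in> space l \<and> constr_all l \<mu> L x t"
  show "\<forall>e. t e \<in> feasible_block l \<mu> L x e"
  proof
    fix e
    show "t e \<in> feasible_block l \<mu> L x e"
    proof (cases "e \<in> pairs l")
      case True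
      then obtain i j where e: "e = (i, j)" and "(i, j) \<in> pairs l" by (cases e) auto
      then have "constrC \<mu> L (x i) (x j) (t e i) (t e j)"
        using t by (auto simp: constr_all_def)
      moreover have "t e m = 0" if "m \<noteq> i" "m \<noteq> j" for m
        using t that e by (simp add: space_def slots_def)
      ultimately show ?thesis using True e by (simp add: feasible_block_def)
    next
      case False
      then have "t e m = 0" for m
        using t by (cases e) (auto simp: space_def slots_def)
      then show ?thesis using False by (simp add: feasible_block_def fun_eq_iff)
    qed
  qed
next
  assume t: "\<forall>e. t e \<in> feasible_block l \<mu> L x e"
  have zero: "t e m = 0" if "(e, m) \<notin> slots l" for e m
    using t[rule_format, of e] that by (cases "e \<in> pairs l") (auto simp: feasible_block_def slots_def)
  have "constrC \<mu> L (x i) (x j) (t (i, j) i) (t (i, j) j)" if "(i, j) \<in> pairs l" for i j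
    using t[rule_format, of "(i, j)"] that by (simp add: feasible_block_def)
  then have "constr_all l \<mu> L x t" by (auto simp: constr_all_def)
  with zero show "t \<in> space l \<and> constr_all l \<mu> L x t" by (simp add: space_def)
qed

lemma minimal_on_feasible_block_iff:
  assumes "(i, j) \<in> pairs l"
  shows "(\<forall>u\<in>feasible_block l \<mu> L x (i, j). c \<le> F (u i) (u j))
     \<longleftrightarrow> (\<forall>a b. constrC \<mu> L (x i) (x j) a b \<longrightarrow> c \<le> F a b)"
proof
  assume min: "\<forall>u\<in>feasible_block l \<mu> L x (i, j). c \<le> F (u i) (u j)"
  have "i \<noteq> j" using assms by (simp add: pairs_def)
  show "\<forall>a b. constrC \<mu> L (x i) (x j) a b \<longrightarrow> c \<le> F a b"
  proof (intro allI impI)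
    fix a b assume "constrC \<mu> L (x i) (x j) a b"
    then have "(\<lambda>m. if m = i then a else if m = j then b else 0) \<in> feasible_block l \<mu> L x (i, j)"
      using assms \<open>i \<noteq> j\<close> by (simp add: feasible_block_def)
    then show "c \<le> F a b" using min \<open>i \<noteq> j\<close> by fastforce
  qed
next
  assume min: "\<forall>a b. constrC \<mu> L (x i) (x j) a b \<longrightarrow> c \<le> F a b"
  show "\<forall>u\<in>feasible_block l \<mu> L x (i, j). c \<le> F (u i) (u j)"
  proof
    fix u assume "u \<in> feasible_block l \<mu> L x (i, j)"
    then have "constrC \<mu> L (x i) (x j) (u i) (u j)"
      using assms by (simp add: feasible_block_def)
    then show "c \<le> F (u i) (u j)" using min by blast
  qed
qed

lemma is_prox_constr_all_iff:
  "is_prox l (constr_all l \<mu> L x) (objective l y z) \<rho> w p \<longleftrightarrow>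
     p \<in> space l \<and>
     (\<forall>(i, j)\<in>pairs l.
        edge_argmin \<mu> L \<rho> l x y z i j (w (i, j) i) (w (i, j) j) (p (i, j) i) (p (i, j) j))"
proof -
  let ?B = "feasible_block l \<mu> L x"
  let ?f = "\<lambda>e u. edge_cost \<rho> l y z (fst e) (snd e) (w e (fst e)) (w e (snd e)) (u (fst e)) (u (snd e))"
  have argmin_iff:
    "edge_argmin \<mu> L \<rho> l x y z (fst e) (snd e) (w e (fst e)) (w e (snd e)) (p e (fst e)) (p e (snd e))
     \<longleftrightarrow> constrC \<mu> L (x (fst e)) (x (snd e)) (p e (fst e)) (p e (snd e))
         \<and> (\<forall>u\<in>?B e. ?f e (p e) \<le> ?f e u)"
    if "e \<in> pairs l" for e
    using that minimal_on_feasible_block_iff[of "fst e" "snd e" l \<mu> L x "?f e (p e)"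
        "edge_cost \<rho> l y z (fst e) (snd e) (w e (fst e)) (w e (snd e))"]
    by (simp add: edge_argmin_iff)
  have "is_prox l (constr_all l \<mu> L x) (objective l y z) \<rho> w p \<longleftrightarrow>
      (\<forall>e. p e \<in> ?B e) \<and>
      (\<forall>t. (\<forall>e. t e \<in> ?B e) \<longrightarrow> (\<Sum>e\<in>pairs l. ?f e (p e)) \<le> (\<Sum>e\<in>pairs l. ?f e (t e)))"
    unfolding is_prox_def objective_plus_dist_eq_sum_edge_cost
      space_constr_all_iff_feasible_blocks[symmetric] by auto
  also have "\<dots> \<longleftrightarrow> (\<forall>e. p e \<in> ?B e) \<and> (\<forall>e\<in>pairs l. \<forall>u\<in>?B e. ?f e (p e) \<le> ?f e u)"
    using sum_minimal_iff_termwise_minimal[OF finite_pairs, of p ?B ?f] by auto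
  also have "\<dots> \<longleftrightarrow> p \<in> space l \<and> (\<forall>e\<in>pairs l.
      edge_argmin \<mu> L \<rho> l x y z (fst e) (snd e) (w e (fst e)) (w e (snd e)) (p e (fst e)) (p e (snd e)))"
    unfolding space_constr_all_iff_feasible_blocks[symmetric]
    by (auto simp: constr_all_def split_beta argmin_iff)
  finally show ?thesis by (simp add: split_beta)
qed

definition consensus_average :: "nat \<Rightarrow> ('n::finite) var \<Rightarrow> 'n var" where
  "consensus_average l w = (\<lambda>e m.
     if (e, m) \<in> slots l then (1 / (real l - 1)) *\<^sub>R (\<Sum>e'\<in>incident l m. w e' m) else 0)"

lemma consensus_average_in_space: "consensus_average l w \<in> space l"
  by (simp add: consensus_average_def space_def)

lemma consensus_consensus_average: "consensus l (consensus_average l w)"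
  by (simp add: consensus_average_def consensus_def)

lemma eq_consensus_average_iff:
  "v = consensus_average l w \<longleftrightarrow>
     v \<in> space l \<and> (\<forall>(e, i)\<in>slots l. v e i = (1 / (real l - 1)) *\<^sub>R (\<Sum>e'\<in>incident l i. w e' i))"
  by (auto simp: consensus_average_def space_def fun_eq_iff)

lemma sum_incident_consensus_average_diff:
  assumes "l \<ge> 2" and "m < l"
  shows "(\<Sum>e\<in>incident l m. consensus_average l w e m - w e m) = 0"
proof -
  have "(\<Sum>e\<in>incident l m. consensus_average l w e m - w e m)
      = (\<Sum>e\<in>incident l m. (1 / (real l - 1)) *\<^sub>R (\<Sum>e'\<in>incident l m. w e' m) - w e m)"
    by (rule sum.cong) (simp_all add: consensus_average_def slots_iff_incident)
  also have "\<dots> = (real (card (incident l m)) / (real l - 1)) *\<^sub>R (\<Sum>e'\<in>incident l m. w e' m)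
      - (\<Sum>e\<in>incident l m. w e m)"
    by (simp add: sum_subtractf sum_constant_scaleR)
  also have "real (card (incident l m)) / (real l - 1) = 1"
    using assms by (simp add: card_incident of_nat_diff)
  finally show ?thesis by simp
qed

lemma power2_norm_diff_split:
  fixes p q r :: "'a::real_inner"
  shows "(norm (p - r))\<^sup>2 = (norm (q - r))\<^sup>2 + (norm (p - q))\<^sup>2 + 2 * inner (p - q) (q - r)"
  using dot_norm[of "p - q" "q - r"] by simp

lemma consensus_diff_orthogonal_residual:
  fixes t w :: "('n::finite) var"
  assumes "l \<ge> 2" and "consensus l t"
  defines "a \<equiv> consensus_average l w"
  shows "(\<Sum>(e, m)\<in>slots l. inner (t e m - a e m) (a e m - w e m)) = 0"
proof -
  have "(\<Sum>e\<in>incident l m. inner (t e m - a e m) (a e m - w e m)) = 0" if "m < l" for m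
  proof (cases "incident l m = {}")
    case False
    then obtain e0 where e0: "e0 \<in> incident l m" by auto
    have "t e m - a e m = t e0 m - a e0 m" if "e \<in> incident l m" for e
    proof -
      have "t e m = t e0 m"
        using assms(2) that e0 unfolding consensus_def slots_iff_incident by blast
      moreover have "a e m = a e0 m"
        using that e0 by (simp add: a_def consensus_average_def slots_iff_incident)
      ultimately show ?thesis by simp
    qed
    then have "(\<Sum>e\<in>incident l m. inner (t e m - a e m) (a e m - w e m))
        = inner (t e0 m - a e0 m) (\<Sum>e\<in>incident l m. a e m - w e m)"
      by (simp add: inner_sum_right)
    also have "\<dots> = 0"
      using sum_incident_consensus_average_diff[OF assms(1) that, of w] by (simp add: a_def)
    finally show ?thesis .
  qed simp
  then show ?thesis by (simp add: sum_slots_incident)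
qed

lemma sqn_consensus_pythagoras:
  fixes t w :: "('n::finite) var"
  assumes "l \<ge> 2" and "consensus l t"
  defines "a \<equiv> consensus_average l w"
  shows "sqn l (vdiff t w) = sqn l (vdiff a w) + sqn l (vdiff t a)"
proof -
  have "sqn l (vdiff t w) = (\<Sum>(e, m)\<in>slots l. (norm (a e m - w e m))\<^sup>2 + (norm (t e m - a e m))\<^sup>2
      + 2 * inner (t e m - a e m) (a e m - w e m))"
    unfolding sqn_def vdiff_def by (rule sum.cong[OF refl]) (clarsimp, rule power2_norm_diff_split)
  also have "\<dots> = sqn l (vdiff a w) + sqn l (vdiff t a)
      + 2 * (\<Sum>(e, m)\<in>slots l. inner (t e m - a e m) (a e m - w e m))"
    by (simp add: sqn_def vdiff_def sum.distrib sum_distrib_left split_beta)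
  finally show ?thesis
    using consensus_diff_orthogonal_residual[OF assms(1,2)] by (simp add: a_def)
qed

lemma sqn_nonneg: "0 \<le> sqn l t"
  by (simp add: sqn_def sum_nonneg split_beta)

lemma sqn_vdiff_eq_0_imp_eq:
  assumes "p \<in> space l" "q \<in> space l" "sqn l (vdiff p q) = 0"
  shows "p = q"
proof (intro ext)
  fix e m
  have zero: "\<forall>(e, m)\<in>slots l. (norm (p e m - q e m))\<^sup>2 = 0"
    using assms(3) by (simp add: sqn_def vdiff_def sum_nonneg_eq_0_iff finite_slots split_beta)
  show "p e m = q e m"
  proof (cases "(e, m) \<in> slots l")
    case True
    then show ?thesis using bspec[OF zero True] by simp
  next
    case False
    then show ?thesis using assms(1,2) unfolding space_def mem_Collect_eq by metis
  qed
qed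

lemma is_prox_consensus_iff:
  assumes "l \<ge> 2" and "\<rho> > 0"
  shows "is_prox l (consensus l) (\<lambda>_. 0) \<rho> w v \<longleftrightarrow> v = consensus_average l w"
proof -
  let ?a = "consensus_average l w"
  have "is_prox l (consensus l) (\<lambda>_. 0) \<rho> w v \<longleftrightarrow>
      v \<in> space l \<and> consensus l v \<and> (\<forall>t\<in>space l. consensus l t \<longrightarrow> sqn l (vdiff v w) \<le> sqn l (vdiff t w))"
    using assms(2) by (simp add: is_prox_def divide_le_cancel)
  also have "\<dots> \<longleftrightarrow> v = ?a"
  proof
    assume v: "v \<in> space l \<and> consensus l v \<and>
      (\<forall>t\<in>space l. consensus l t \<longrightarrow> sqn l (vdiff v w) \<le> sqn l (vdiff t w))"
    then have "sqn l (vdiff v w) \<le> sqn l (vdiff ?a w)"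
      using consensus_average_in_space[of l w] consensus_consensus_average[of l w] by blast
    then have "sqn l (vdiff v ?a) = 0"
      using sqn_consensus_pythagoras[OF assms(1), of v w] sqn_nonneg[of l "vdiff v ?a"] v by simp
    then show "v = ?a"
      using sqn_vdiff_eq_0_imp_eq[of v l ?a] consensus_average_in_space[of l w] v by blast
  next
    assume "v = ?a"
    moreover have "sqn l (vdiff ?a w) \<le> sqn l (vdiff t w)" if "consensus l t" for t
      using sqn_consensus_pythagoras[OF assms(1) that, of w] sqn_nonneg[of l "vdiff t ?a"] by simp
    ultimately show "v \<in> space l \<and> consensus l v \<and>
      (\<forall>t\<in>space l. consensus l t \<longrightarrow> sqn l (vdiff v w) \<le> sqn l (vdiff t w))"
      using consensus_average_in_space[of l w] consensus_consensus_average[of l w] by simp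
  qed
  finally show ?thesis .
qed

theorem lemma4:
  fixes l :: nat and \<mu> L \<rho> :: real
    and x z :: "nat \<Rightarrow> real ^ 'n" and y :: "nat \<Rightarrow> real"
    and s \<xi> v :: "nat \<Rightarrow> 'n var"
  assumes "l \<ge> 2" and "0 < \<mu>" and "\<mu> < L" and "0 < \<rho>"
  shows "((\<forall>h. is_prox l (constr_all l \<mu> L x) (objective l y z) \<rho> (s h) (\<xi> h)
            \<and> is_prox l (consensus l) (\<lambda>_. 0) \<rho> (\<lambda>e m. 2 *\<^sub>R \<xi> h e m - s h e m) (v h)
            \<and> s (Suc h) = (\<lambda>e m. s h e m + v h e m - \<xi> h e m))
     \<longleftrightarrow>
         (\<forall>h. \<xi> h \<in> space l
            \<and> (\<forall>(i, j)\<in>pairs l.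
                 edge_argmin \<mu> L \<rho> l x y z i j (s h (i, j) i) (s h (i, j) j)
                   (\<xi> h (i, j) i) (\<xi> h (i, j) j))
            \<and> v h \<in> space l
            \<and> (\<forall>(e, i)\<in>slots l.
                 v h e i = (1 / (real l - 1)) *\<^sub>R
                   (\<Sum>e'\<in>{e' \<in> pairs l. i = fst e' \<or> i = snd e'}.
                      2 *\<^sub>R \<xi> h e' i - s h e' i))
            \<and> s (Suc h) = (\<lambda>e m. s h e m + v h e m - \<xi> h e m)))
     \<and> card (pairs l) = l * (l - 1) div 2"
proof -
  have consensus_step:
    "is_prox l (consensus l) (\<lambda>_. 0) \<rho> (\<lambda>e m. 2 *\<^sub>R \<xi> h e m - s h e m) (v h) \<longleftrightarrow>
       v h \<in> space l \<and>
       (\<forall>(e, i)\<in>slots l. v h e i = (1 / (real l - 1)) *\<^sub>R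
          (\<Sum>e'\<in>{e' \<in> pairs l. i = fst e' \<or> i = snd e'}. 2 *\<^sub>R \<xi> h e' i - s h e' i))" for h
    by (simp only: is_prox_consensus_iff[OF assms(1,4)] eq_consensus_average_iff incident_def)
  show ?thesis
    by (simp only: is_prox_constr_all_iff consensus_step card_pairs conj_assoc simp_thms)
qed

end
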